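(* Let $(V,g_{ij},\rho,p)$ be a spherically symmetric static perfect fluid solution of the Euler–Einstein equations $\Delta V=4\pi(\rho+3p)V$, $R_{ij}=V^{-1}\nabla_i\nabla_jV+4\pi(\rho-p)g_{ij}$, $\nabla_ip=-V^{-1}(\rho+p)\nabla_iV$ on a 3-manifold with barotropic equation of state $\rho=\rho(p)$, and write $g=h(r)\,dr^2+r^2(d\theta^2+\sin^2\theta\,d\phi^2)$ with $h>0$. Let $\xi$ be the vector field with $\xi_a dx^a=r\sqrt{h}\,dr$ (a conformal Killing vector, $\nabla_{(a}\xi_{b)}=h^{-1/2}g_{ab}$). Let $Y=V/V_S$, regard $\rho,p$ as functions of $Y$, let $H_0(Y)=\rho+\rho Y+6pY$, and define $$\sigma_{ij}=\frac{1-Y^2}{Y}\nabla_i\nabla_jY+6Y_{,i}Y_{,j}-2g_{ij}Y_{,d}Y^{,d}+g_{ij}\big[-4\pi(1-Y^2)(\rho+p)-16\pi pY(1-Y)\big]-16\pi g_{ij}\int_1^Y H_0(Y')\,dY'.$$ Then $$\nabla^i(\sigma_{ij}\xi^j)=-8\pi\,\frac{1}{\sqrt h}\Big[(1-Y)H_0(Y)+6\int_1^Y H_0(Y')\,dY'\Big].$$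
   Context: $V>0$ is the norm of the static Killing vector of the spacetime metric $-V^2dt^2+g_{ij}dx^idx^j$; $\nabla$, $\Delta$ refer to $g$. $V_S$ is the value of $V$ on the fluid surface $\{p=0\}$ for finite fluids and $V_S=1$ (the value at infinity) for fluids extending to infinity. By the Euler equation, $\log Y=-\int_0^p(\rho(p')+p')^{-1}dp'$, so $Y\in(0,1]$ is a monotone function of $p$ and $\rho,p$ can be regarded as functions of $Y$. *)

theory Defs
  imports "HOL-Analysis.Analysis"
begin

text \<open>A point is given by its
coordinates x 0, x 1, x 2 (only these three are ever varied); indices range over {0,1,2}.
Here the chart is (r, theta, phi) = (x 0, x 1, x 2).\<close>

type_synonym pt = "nat \<Rightarrow> real"

definition pd :: "(pt \<Rightarrow> real) \<Rightarrow> nat \<Rightarrow> pt \<Rightarrow> real" where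
  "pd f i x = deriv (\<lambda>t. f (x(i := t))) (x i)"

definition cof3 :: "(nat \<Rightarrow> nat \<Rightarrow> real) \<Rightarrow> nat \<Rightarrow> nat \<Rightarrow> real" where
  "cof3 A i j =
     A ((i+1) mod 3) ((j+1) mod 3) * A ((i+2) mod 3) ((j+2) mod 3)
   - A ((i+1) mod 3) ((j+2) mod 3) * A ((i+2) mod 3) ((j+1) mod 3)"

definition det3 :: "(nat \<Rightarrow> nat \<Rightarrow> real) \<Rightarrow> real" where
  "det3 A = (\<Sum>j<3. A 0 j * cof3 A 0 j)"

definition inv3 :: "(nat \<Rightarrow> nat \<Rightarrow> real) \<Rightarrow> nat \<Rightarrow> nat \<Rightarrow> real" where
  "inv3 A i j = cof3 A j i / det3 A"

definition ginv :: "(pt \<Rightarrow> nat \<Rightarrow> nat \<Rightarrow> real) \<Rightarrow> pt \<Rightarrow> nat \<Rightarrow> nat \<Rightarrow> real" where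
  "ginv g x = inv3 (g x)"

definition christ :: "(pt \<Rightarrow> nat \<Rightarrow> nat \<Rightarrow> real) \<Rightarrow> nat \<Rightarrow> nat \<Rightarrow> nat \<Rightarrow> pt \<Rightarrow> real" where
  "christ g k i j x = (1/2) * (\<Sum>l<3. ginv g x k l *
      (pd (\<lambda>y. g y j l) i x + pd (\<lambda>y. g y i l) j x - pd (\<lambda>y. g y i j) l x))"

definition hess :: "(pt \<Rightarrow> nat \<Rightarrow> nat \<Rightarrow> real) \<Rightarrow> (pt \<Rightarrow> real) \<Rightarrow> pt \<Rightarrow> nat \<Rightarrow> nat \<Rightarrow> real" where
  "hess g f x i j = pd (\<lambda>y. pd f j y) i x - (\<Sum>k<3. christ g k i j x * pd f k x)"

definition lap :: "(pt \<Rightarrow> nat \<Rightarrow> nat \<Rightarrow> real) \<Rightarrow> (pt \<Rightarrow> real) \<Rightarrow> pt \<Rightarrow> real" where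
  "lap g f x = (\<Sum>i<3. \<Sum>j<3. ginv g x i j * hess g f x i j)"

definition ricci :: "(pt \<Rightarrow> nat \<Rightarrow> nat \<Rightarrow> real) \<Rightarrow> pt \<Rightarrow> nat \<Rightarrow> nat \<Rightarrow> real" where
  "ricci g x i j = (\<Sum>k<3. pd (\<lambda>y. christ g k i j y) k x - pd (\<lambda>y. christ g k i k y) j x
      + (\<Sum>l<3. christ g k k l x * christ g l i j x - christ g k j l x * christ g l i k x))"

definition gnorm2 :: "(pt \<Rightarrow> nat \<Rightarrow> nat \<Rightarrow> real) \<Rightarrow> (pt \<Rightarrow> real) \<Rightarrow> pt \<Rightarrow> real" where
  "gnorm2 g f x = (\<Sum>i<3. \<Sum>j<3. ginv g x i j * pd f i x * pd f j x)"

definition raise :: "(pt \<Rightarrow> nat \<Rightarrow> nat \<Rightarrow> real) \<Rightarrow> (pt \<Rightarrow> nat \<Rightarrow> real) \<Rightarrow> pt \<Rightarrow> nat \<Rightarrow> real" where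
  "raise g w x i = (\<Sum>j<3. ginv g x i j * w x j)"

definition divg :: "(pt \<Rightarrow> nat \<Rightarrow> nat \<Rightarrow> real) \<Rightarrow> (pt \<Rightarrow> nat \<Rightarrow> real) \<Rightarrow> pt \<Rightarrow> real" where
  "divg g w x = (\<Sum>i<3. \<Sum>j<3. ginv g x i j *
      (pd (\<lambda>y. w y i) j x - (\<Sum>k<3. christ g k j i x * w x k)))"

definition sph_metric :: "(real \<Rightarrow> real) \<Rightarrow> pt \<Rightarrow> nat \<Rightarrow> nat \<Rightarrow> real" where
  "sph_metric h x i j =
     (if i = j then (if i = 0 then h (x 0) else if i = 1 then (x 0)\<^sup>2 else (x 0)\<^sup>2 * (sin (x 1))\<^sup>2)
      else 0)"

definition xi_cov :: "(real \<Rightarrow> real) \<Rightarrow> pt \<Rightarrow> nat \<Rightarrow> real" where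
  "xi_cov h x a = (if a = 0 then x 0 * sqrt (h (x 0)) else 0)"

definition H0 :: "(real \<Rightarrow> real) \<Rightarrow> (real \<Rightarrow> real) \<Rightarrow> real \<Rightarrow> real" where
  "H0 rho p y = rho y + rho y * y + 6 * p y * y"

definition intH0 :: "(real \<Rightarrow> real) \<Rightarrow> (real \<Rightarrow> real) \<Rightarrow> real \<Rightarrow> real" where
  "intH0 rho p y = (if y \<le> 1 then - integral {y..1} (H0 rho p) else integral {1..y} (H0 rho p))"

definition sigma :: "(pt \<Rightarrow> nat \<Rightarrow> nat \<Rightarrow> real) \<Rightarrow> (pt \<Rightarrow> real) \<Rightarrow> (real \<Rightarrow> real) \<Rightarrow> (real \<Rightarrow> real)
                      \<Rightarrow> pt \<Rightarrow> nat \<Rightarrow> nat \<Rightarrow> real" where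
  "sigma g Yf rho p x i j =
     (let Y = Yf x in
       (1 - Y\<^sup>2) / Y * hess g Yf x i j + 6 * pd Yf i x * pd Yf j x
       - 2 * g x i j * gnorm2 g Yf x
       + g x i j * (- 4 * pi * (1 - Y\<^sup>2) * (rho Y + p Y) - 16 * pi * p Y * Y * (1 - Y))
       - 16 * pi * g x i j * intH0 rho p Y)"

end

theory Submission
  imports Defs
begin

text \<open>In the chart (r, theta, phi) every field involved depends on r only, so the covector
sigma_ij xi^j has only an r-component, and its divergence is the radial derivative of the flux
Q = r^3 sigma_rr / h, divided by r^2 sqrt h.  The field equations reduce to first-order radial
equations: the Laplace equation eliminates Y'', the rr- and theta-theta-components of the Ricci
equation give h' and the Tolman--Oppenheimer--Volkoff equation 2 r Y' = Y (h - 1 + 8 pi p r^2 h),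
and the Euler equation gives p'.  After these substitutions sigma_rr is an explicit function of
r, h, p, Y and int_1^Y H_0, and differentiating Q along the radial equations is an algebraic
identity.\<close>

(* Keeps the coordinate index 1 a numeral; simp would otherwise rewrite it to Suc 0. *)
declare One_nat_def [simp del]

lemma sum_lessThan_3: "(\<Sum>j<(3::nat). f j) = f 0 + f 1 + (f 2 :: real)"
  by (simp add: numeral_3_eq_3 numeral_2_eq_2 One_nat_def)

lemma less_3_iff: "(i::nat) < 3 \<longleftrightarrow> i = 0 \<or> i = 1 \<or> i = 2"
  by auto

lemma pd_eq_on_open:
  assumes "open U" "y i \<in> U" "\<And>t. t \<in> U \<Longrightarrow> f (y(i:=t)) = \<phi> t"
    and "(\<phi> has_real_derivative D) (at (y i))"
  shows "pd f i y = D"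
  unfolding pd_def
  by (rule DERIV_imp_deriv, rule has_field_derivative_transform_within_open[OF assms(4) assms(1,2)])
     (use assms(3) in simp)

lemma pd_radial: "pd (\<lambda>z. f (z 0)) i = (\<lambda>y. if i = 0 then deriv f (y 0) else 0)"
  unfolding pd_def by auto

lemma pd_zero: "pd (\<lambda>y. 0) i y = 0"
  by (simp add: pd_def)

lemma deriv_divide_const_on_open:
  fixes V :: "real \<Rightarrow> real"
  assumes U: "open U" "r \<in> U" and V_diff: "\<forall>s\<in>U. V differentiable (at s)"
    and V'_diff: "deriv V differentiable (at r)"
  shows "deriv (\<lambda>s. V s / c) r = deriv V r / c"
    and "deriv (deriv (\<lambda>s. V s / c)) r = deriv (deriv V) r / c"
proof -
  have dY: "deriv (\<lambda>s. V s / c) s = deriv V s / c" if "s \<in> U" for s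
    using V_diff that
    by (intro DERIV_imp_deriv DERIV_cdivide) (simp add: DERIV_deriv_iff_real_differentiable)
  then show "deriv (\<lambda>s. V s / c) r = deriv V r / c"
    using U by blast
  have "((\<lambda>s. deriv V s / c) has_real_derivative deriv (deriv V) r / c) (at r)"
    using V'_diff by (intro DERIV_cdivide) (simp add: DERIV_deriv_iff_real_differentiable)
  then have "(deriv (\<lambda>s. V s / c) has_real_derivative deriv (deriv V) r / c) (at r)"
    by (rule has_field_derivative_transform_within_open[OF _ U]) (simp add: dY)
  then show "deriv (deriv (\<lambda>s. V s / c)) r = deriv (deriv V) r / c"
    by (rule DERIV_imp_deriv)
qed

lemma has_real_derivative_cot:
  assumes "sin x \<noteq> 0"
  shows "((\<lambda>t. cos t / sin t) has_real_derivative - 1 / (sin x)\<^sup>2) (at x)"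
proof -
  have "- 1 / (sin x)\<^sup>2 = (- sin x * sin x - cos x * cos x) / (sin x * sin x)"
    using assms sin_cos_squared_add3[of x] by (simp add: field_simps power2_eq_square)
  then show ?thesis
    using assms by (auto intro!: derivative_eq_intros)
qed

subsection \<open>The spherically symmetric metric\<close>

definition sph_nondegenerate :: "(real \<Rightarrow> real) \<Rightarrow> pt \<Rightarrow> bool" where
  "sph_nondegenerate h y \<longleftrightarrow> h (y 0) \<noteq> 0 \<and> y 0 \<noteq> 0 \<and> sin (y 1) \<noteq> 0"

lemma sph_nondegenerateI:
  assumes "h (y 0) > 0" "y 0 > 0" "0 < y 1" "y 1 < pi"
  shows "sph_nondegenerate h y"
  using assms sin_gt_zero[of "y 1"] unfolding sph_nondegenerate_def by auto

definition sph_metric_deriv :: "(real \<Rightarrow> real) \<Rightarrow> nat \<Rightarrow> nat \<Rightarrow> nat \<Rightarrow> pt \<Rightarrow> real" where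
  "sph_metric_deriv h i j l y =
     (if j \<noteq> l then 0
      else if j = 0 then (if i = 0 then deriv h (y 0) else 0)
      else if j = 1 then (if i = 0 then 2 * y 0 else 0)
      else if i = 0 then 2 * y 0 * (sin (y 1))\<^sup>2
      else if i = 1 then 2 * (y 0)\<^sup>2 * sin (y 1) * cos (y 1) else 0)"

lemma pd_sph_metric:
  assumes "i < 3" "j < 3" "l < 3"
  shows "pd (\<lambda>y. sph_metric h y j l) i y = sph_metric_deriv h i j l y"
proof -
  have "deriv (\<lambda>t. t\<^sup>2 * c) s = 2 * s * c" "deriv (\<lambda>t. c * (sin t)\<^sup>2) s = 2 * c * sin s * cos s"
    "deriv (\<lambda>t. t\<^sup>2) s = 2 * s" for s c :: real
    by (rule DERIV_imp_deriv; auto intro!: derivative_eq_intros)+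
  then show ?thesis
    using assms unfolding less_3_iff
    by (elim disjE; simp add: pd_def sph_metric_def sph_metric_deriv_def)
qed

lemma ginv_sph_metric_off:
  assumes "i < 3" "j < 3" "i \<noteq> j"
  shows "ginv (sph_metric h) y i j = 0"
  using assms unfolding less_3_iff
  by (elim disjE; simp add: ginv_def inv3_def cof3_def sph_metric_def)

lemma det3_sph_metric: "det3 (sph_metric h y) = h (y 0) * ((y 0)\<^sup>2 * ((y 0)\<^sup>2 * (sin (y 1))\<^sup>2))"
  by (simp add: det3_def cof3_def sum_lessThan_3 sph_metric_def)

lemma ginv_sph_metric_diag:
  assumes "sph_nondegenerate h y"
  shows "ginv (sph_metric h) y 0 0 = 1 / h (y 0)"
    and "ginv (sph_metric h) y 1 1 = 1 / (y 0)\<^sup>2"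
    and "ginv (sph_metric h) y 2 2 = 1 / ((y 0)\<^sup>2 * (sin (y 1))\<^sup>2)"
  using assms unfolding ginv_def inv3_def det3_sph_metric
  by (simp_all add: cof3_def sph_metric_def sph_nondegenerate_def field_simps)

definition sph_christ :: "(real \<Rightarrow> real) \<Rightarrow> nat \<Rightarrow> nat \<Rightarrow> nat \<Rightarrow> pt \<Rightarrow> real" where
  "sph_christ h k i j y =
    (if k = 0 then
       (if i = 0 \<and> j = 0 then deriv h (y 0) / (2 * h (y 0))
        else if i = 1 \<and> j = 1 then - y 0 / h (y 0)
        else if i = 2 \<and> j = 2 then - y 0 * (sin (y 1))\<^sup>2 / h (y 0) else 0)
     else if k = 1 then
       (if (i = 0 \<and> j = 1) \<or> (i = 1 \<and> j = 0) then 1 / y 0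
        else if i = 2 \<and> j = 2 then - sin (y 1) * cos (y 1) else 0)
     else
       (if (i = 0 \<and> j = 2) \<or> (i = 2 \<and> j = 0) then 1 / y 0
        else if (i = 1 \<and> j = 2) \<or> (i = 2 \<and> j = 1) then cos (y 1) / sin (y 1) else 0))"

lemma christ_sph_metric:
  assumes "sph_nondegenerate h y" "k < 3" "i < 3" "j < 3"
  shows "christ (sph_metric h) k i j y = sph_christ h k i j y"
  using assms(2-4) unfolding less_3_iff
  by (elim disjE; use assms(1) in \<open>simp add: christ_def sum_lessThan_3 ginv_sph_metric_off
      ginv_sph_metric_diag pd_sph_metric sph_metric_deriv_def sph_christ_def
      sph_nondegenerate_def field_simps power2_eq_square\<close>)

lemma christ_sph_metric_0_i0:
  "christ (sph_metric h) 0 1 0 y = 0" "christ (sph_metric h) 0 2 0 y = 0"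
  by (simp_all add: christ_def sum_lessThan_3 ginv_sph_metric_off pd_sph_metric sph_metric_deriv_def)

lemma pd_christ_sph_metric:
  assumes "open U" "y m \<in> U" "\<And>t. t \<in> U \<Longrightarrow> sph_nondegenerate h (y(m:=t))"
    and "\<And>t. t \<in> U \<Longrightarrow> sph_christ h k i j (y(m:=t)) = \<phi> t"
    and "(\<phi> has_real_derivative D) (at (y m))" "k < 3" "i < 3" "j < 3"
  shows "pd (\<lambda>z. christ (sph_metric h) k i j z) m y = D"
  by (rule pd_eq_on_open[where U=U and \<phi>=\<phi>]) (simp_all add: christ_sph_metric assms)

lemma ricci_sph_metric:
  assumes U: "open U" "y 0 \<in> U" and U_pos: "\<forall>r\<in>U. r > 0 \<and> h r > 0"
    and h_diff: "h differentiable (at (y 0))" and theta: "0 < y 1" "y 1 < pi"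
  shows "ricci (sph_metric h) y 0 0 = deriv h (y 0) / (y 0 * h (y 0))"
    and "ricci (sph_metric h) y 1 1 = 1 - 1 / h (y 0) + y 0 * deriv h (y 0) / (2 * (h (y 0))\<^sup>2)"
proof -
  let ?G = "sph_metric h"
  have nd0: "sph_nondegenerate h (y(0:=t))" if "t \<in> U" for t
    using that U_pos theta by (intro sph_nondegenerateI) auto
  have nd1: "sph_nondegenerate h (y(1:=t))" if "t \<in> {0<..<pi}" for t
    using that U_pos U theta by (intro sph_nondegenerateI) auto
  have nd: "sph_nondegenerate h y" and nd2: "sph_nondegenerate h (y(2:=t))" for t
    using nd0[OF U(2)] by (simp_all add: sph_nondegenerate_def)
  have r: "y 0 > 0" and hr: "h (y 0) > 0" and s: "sin (y 1) > 0"
    using U_pos U theta sin_gt_zero by auto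
  have hD: "(h has_real_derivative deriv h (y 0)) (at (y 0))"
    using h_diff by (simp add: DERIV_deriv_iff_real_differentiable)
  have pd_christ_theta: "pd (\<lambda>z. christ ?G 1 0 0 z) 1 y = 0" "pd (\<lambda>z. christ ?G 0 1 0 z) 1 y = 0"
    by (rule pd_christ_sph_metric[where U="{0<..<pi}" and \<phi>="\<lambda>t. 0"];
        use theta nd1 in \<open>auto simp: sph_christ_def\<close>)+
  have pd_christ_phi: "pd (\<lambda>z. christ ?G 2 0 0 z) 2 y = 0" "pd (\<lambda>z. christ ?G 2 1 1 z) 2 y = 0"
    by (rule pd_christ_sph_metric[where U=UNIV and \<phi>="\<lambda>t. 0"];
        use nd2 in \<open>auto simp: sph_christ_def\<close>)+
  have pd_christ_r: "pd (\<lambda>z. christ ?G 1 0 1 z) 0 y = - 1 / (y 0)\<^sup>2"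
    "pd (\<lambda>z. christ ?G 2 0 2 z) 0 y = - 1 / (y 0)\<^sup>2"
    by (rule pd_christ_sph_metric[where U=U and \<phi>="\<lambda>t. 1 / t"];
        use U nd0 r in \<open>auto simp: sph_christ_def power2_eq_square intro!: derivative_eq_intros\<close>)+
  have pd_christ_rh:
    "pd (\<lambda>z. christ ?G 0 1 1 z) 0 y = - 1 / h (y 0) + y 0 * deriv h (y 0) / (h (y 0))\<^sup>2"
    by (rule pd_christ_sph_metric[where U=U and \<phi>="\<lambda>t. - t / h t"])
       (use U nd0 hr in \<open>auto simp: sph_christ_def power2_eq_square field_simps
          intro!: derivative_eq_intros hD\<close>)
  have pd_christ_cot: "pd (\<lambda>z. christ ?G 2 1 2 z) 1 y = - 1 / (sin (y 1))\<^sup>2"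
    by (rule pd_christ_sph_metric[where U="{0<..<pi}" and \<phi>="\<lambda>t. cos t / sin t"])
       (use theta nd1 s has_real_derivative_cot in \<open>auto simp: sph_christ_def\<close>)
  show "ricci ?G y 0 0 = deriv h (y 0) / (y 0 * h (y 0))"
    using nd r hr unfolding ricci_def sum_lessThan_3
    by (simp add: pd_christ_theta pd_christ_phi pd_christ_r christ_sph_metric sph_christ_def
        field_simps power2_eq_square)
  show "ricci ?G y 1 1 = 1 - 1 / h (y 0) + y 0 * deriv h (y 0) / (2 * (h (y 0))\<^sup>2)"
    using nd r hr s unfolding ricci_def sum_lessThan_3
    by (simp add: pd_christ_theta pd_christ_phi pd_christ_rh pd_christ_cot christ_sph_metric
        sph_christ_def field_simps power2_eq_square)
      (use sin_cos_squared_add3[of "y 1"] in algebra)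
qed

subsection \<open>Radial fields\<close>

lemma hess_sph_metric_radial:
  assumes "sph_nondegenerate h y"
  shows "hess (sph_metric h) (\<lambda>z. f (z 0)) y 0 0
           = deriv (deriv f) (y 0) - deriv h (y 0) / (2 * h (y 0)) * deriv f (y 0)"
    and "hess (sph_metric h) (\<lambda>z. f (z 0)) y 1 1 = y 0 / h (y 0) * deriv f (y 0)"
    and "hess (sph_metric h) (\<lambda>z. f (z 0)) y 2 2 = y 0 * (sin (y 1))\<^sup>2 / h (y 0) * deriv f (y 0)"
  using assms unfolding hess_def sum_lessThan_3
  by (simp_all add: pd_radial pd_zero christ_sph_metric sph_christ_def)

lemma hess_sph_metric_radial_off:
  "hess (sph_metric h) (\<lambda>z. f (z 0)) y 1 0 = 0" "hess (sph_metric h) (\<lambda>z. f (z 0)) y 2 0 = 0"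
  unfolding hess_def sum_lessThan_3
  by (simp_all add: pd_radial christ_sph_metric_0_i0)

lemma lap_sph_metric_radial:
  assumes "sph_nondegenerate h y"
  shows "lap (sph_metric h) (\<lambda>z. f (z 0)) y =
     (deriv (deriv f) (y 0) - deriv h (y 0) / (2 * h (y 0)) * deriv f (y 0)) / h (y 0)
     + 2 * deriv f (y 0) / (y 0 * h (y 0))"
  using assms unfolding lap_def sum_lessThan_3
  by (simp add: ginv_sph_metric_off ginv_sph_metric_diag hess_sph_metric_radial
      sph_nondegenerate_def field_simps power2_eq_square)

lemma gnorm2_sph_metric_radial:
  assumes "sph_nondegenerate h y"
  shows "gnorm2 (sph_metric h) (\<lambda>z. f (z 0)) y = (deriv f (y 0))\<^sup>2 / h (y 0)"
  using assms unfolding gnorm2_def sum_lessThan_3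
  by (simp add: ginv_sph_metric_off ginv_sph_metric_diag pd_radial power2_eq_square)

lemma raise_xi_cov:
  shows "sph_nondegenerate h y \<Longrightarrow>
      raise (sph_metric h) (xi_cov h) y 0 = y 0 * sqrt (h (y 0)) / h (y 0)"
    and "raise (sph_metric h) (xi_cov h) y 1 = 0" "raise (sph_metric h) (xi_cov h) y 2 = 0"
  unfolding raise_def sum_lessThan_3
  by (simp_all add: ginv_sph_metric_off ginv_sph_metric_diag xi_cov_def)

lemma divg_sph_metric_radial:
  assumes r: "x 0 > 0" and h: "h (x 0) > 0" and theta: "sin (x 1) \<noteq> 0"
    and U: "open U" "x 0 \<in> U"
    and w_radial: "\<And>y. w y 1 = 0" "\<And>y. w y 2 = 0"
    and w_flux: "\<And>t. t \<in> U \<Longrightarrow> w (x(0 := t)) 0 = Q t * sqrt (h t) / t\<^sup>2"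
    and QD: "(Q has_real_derivative Q') (at (x 0))"
    and hD: "(h has_real_derivative h') (at (x 0))"
  shows "divg (sph_metric h) w x = Q' / ((x 0)\<^sup>2 * sqrt (h (x 0)))"
proof -
  have nd: "sph_nondegenerate h x"
    using r h theta by (simp add: sph_nondegenerate_def)
  have h': "deriv h (x 0) = h'"
    using hD by (rule DERIV_imp_deriv)
  have sqrt_h: "sqrt (h (x 0)) * sqrt (h (x 0)) = h (x 0)"
    using h by simp
  have flux_D: "((\<lambda>t. Q t * sqrt (h t) / t\<^sup>2) has_real_derivative
      (Q' * sqrt (h (x 0)) + Q (x 0) * h' / (2 * sqrt (h (x 0)))) / (x 0)\<^sup>2
       - 2 * Q (x 0) * sqrt (h (x 0)) / (x 0)^3) (at (x 0))"
    using r h by (auto intro!: derivative_eq_intros QD hD simp: field_simps power2_eq_square power3_eq_cube)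
  have pd_w: "pd (\<lambda>y. w y 0) 0 x
      = (Q' * sqrt (h (x 0)) + Q (x 0) * h' / (2 * sqrt (h (x 0)))) / (x 0)\<^sup>2
       - 2 * Q (x 0) * sqrt (h (x 0)) / (x 0)^3"
    by (rule pd_eq_on_open[where U=U]) (fact U w_flux flux_D)+
  have w0: "w x 0 = Q (x 0) * sqrt (h (x 0)) / (x 0)\<^sup>2"
    using w_flux[OF U(2)] by simp
  show ?thesis
    unfolding divg_def sum_lessThan_3 using nd r h theta
    by (simp add: w_radial pd_zero pd_w w0 h' ginv_sph_metric_off ginv_sph_metric_diag christ_sph_metric
        sph_christ_def field_simps power2_eq_square power3_eq_cube sqrt_h)
qed

subsection \<open>The tensor sigma\<close>

lemma sigma_sph_metric_radial_off:
  "sigma (sph_metric h) (\<lambda>z. f (z 0)) rho p y 1 0 = 0"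
  "sigma (sph_metric h) (\<lambda>z. f (z 0)) rho p y 2 0 = 0"
  unfolding sigma_def Let_def
  by (simp_all add: hess_sph_metric_radial_off pd_radial sph_metric_def)

lemma sigma_xi_sph_metric_radial:
  fixes f :: "real \<Rightarrow> real"
  shows "(\<Sum>j<3. sigma (sph_metric h) (\<lambda>z. f (z 0)) rho p y 1 j
            * raise (sph_metric h) (xi_cov h) y j) = 0"
    and "(\<Sum>j<3. sigma (sph_metric h) (\<lambda>z. f (z 0)) rho p y 2 j
            * raise (sph_metric h) (xi_cov h) y j) = 0"
    and "sph_nondegenerate h y \<Longrightarrow>
      (\<Sum>j<3. sigma (sph_metric h) (\<lambda>z. f (z 0)) rho p y 0 j
          * raise (sph_metric h) (xi_cov h) y j)
        = sigma (sph_metric h) (\<lambda>z. f (z 0)) rho p y 0 0 * (y 0 * sqrt (h (y 0)) / h (y 0))"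
  unfolding sum_lessThan_3
  by (simp_all add: sigma_sph_metric_radial_off raise_xi_cov)

text \<open>sigma_rr is the rr-component of sigma once Y'' has been eliminated by the Laplace equation
and Y' by 2 r Y' = Y (h - 1 + 8 pi P r^2 h); here P = p(Y) and F = int_1^Y H_0.\<close>

definition sigma_rr :: "real \<Rightarrow> real \<Rightarrow> real \<Rightarrow> real \<Rightarrow> real \<Rightarrow> real" where
  "sigma_rr r h P Y F = (let A = h - 1 + 8*pi*P*r^2*h in
     8*pi*P*h*(1-Y)^2 - (1-Y^2)*A/r^2 + Y^2*A^2/r^2 - 16*pi*h*F)"

lemma sigma_sph_metric_radial:
  fixes f :: "real \<Rightarrow> real"
  assumes nd: "sph_nondegenerate h y" and f: "f (y 0) \<noteq> 0"
    and lap_eq: "deriv (deriv f) (y 0) - deriv h (y 0) / (2 * h (y 0)) * deriv f (y 0)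
      = 4*pi*(rho (f (y 0)) + 3*p (f (y 0)))*f (y 0)*h (y 0) - 2*deriv f (y 0)/y 0"
    and tov: "2 * y 0 * deriv f (y 0) = f (y 0) * (h (y 0) - 1 + 8*pi*p (f (y 0))*(y 0)^2*h (y 0))"
  shows "sigma (sph_metric h) (\<lambda>z. f (z 0)) rho p y 0 0
           = sigma_rr (y 0) (h (y 0)) (p (f (y 0))) (f (y 0)) (intH0 rho p (f (y 0)))"
proof -
  have r: "y 0 \<noteq> 0" and h: "h (y 0) \<noteq> 0"
    using nd by (auto simp: sph_nondegenerate_def)
  have f': "deriv f (y 0) = f (y 0) * (h (y 0) - 1 + 8*pi*p (f (y 0))*(y 0)^2*h (y 0)) / (2 * y 0)"
    using tov r by (simp add: field_simps)
  show ?thesis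
    unfolding sigma_def Let_def hess_sph_metric_radial(1)[OF nd] gnorm2_sph_metric_radial[OF nd] lap_eq
    using r h f by (simp add: pd_radial sph_metric_def sigma_rr_def f' field_simps power2_eq_square)
qed

lemma sigma_xi_sph_metric_static:
  fixes f :: "real \<Rightarrow> real"
  assumes nd: "sph_nondegenerate h y" and f: "f (y 0) \<noteq> 0"
    and lap_eq: "deriv (deriv f) (y 0) - deriv h (y 0) / (2 * h (y 0)) * deriv f (y 0)
      = 4*pi*(rho (f (y 0)) + 3*p (f (y 0)))*f (y 0)*h (y 0) - 2*deriv f (y 0)/y 0"
    and tov: "2 * y 0 * deriv f (y 0) = f (y 0) * (h (y 0) - 1 + 8*pi*p (f (y 0))*(y 0)^2*h (y 0))"
  shows "(\<Sum>j<3. sigma (sph_metric h) (\<lambda>z. f (z 0)) rho p y 0 j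
            * raise (sph_metric h) (xi_cov h) y j)
    = (y 0)^3 * sigma_rr (y 0) (h (y 0)) (p (f (y 0))) (f (y 0)) (intH0 rho p (f (y 0))) / h (y 0)
        * sqrt (h (y 0)) / (y 0)\<^sup>2"
  using nd unfolding sigma_xi_sph_metric_radial(3)[OF nd]
    sigma_sph_metric_radial[where y=y and h=h and f=f and rho=rho and p=p, OF nd f lap_eq tov]
  by (simp add: sph_nondegenerate_def field_simps power2_eq_square power3_eq_cube)

lemma intH0_has_real_derivative:
  assumes rho: "continuous_on {0<..1} rho" and p: "continuous_on {0<..1} p"
    and y: "0 < y" "y < 1"
  shows "(intH0 rho p has_real_derivative H0 rho p y) (at y)"
proof -
  have "{y/2..1} \<subseteq> {0<..1}"
    using y by auto
  then have "continuous_on {y/2..1} rho" "continuous_on {y/2..1} p"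
    using continuous_on_subset rho p by blast+
  then have "continuous_on {y/2..1} (H0 rho p)"
    unfolding H0_def[abs_def] by (intro continuous_intros)
  then have "((\<lambda>s. integral {s..1} (H0 rho p)) has_real_derivative - H0 rho p y) (at y within {y/2..1})"
    using integral_has_real_derivative' y by auto
  moreover have "at y within {y/2..1} = at y"
    using y by (intro at_within_interior) auto
  ultimately have "((\<lambda>s. - integral {s..1} (H0 rho p)) has_real_derivative H0 rho p y) (at y)"
    using DERIV_minus by fastforce
  then show ?thesis
    by (rule has_field_derivative_transform_within_open[where S="{0<..<1}"])
       (use y in \<open>auto simp: intH0_def\<close>)
qed

lemma sigma_rr_flux_has_real_derivative:
  fixes h P Y F :: "real \<Rightarrow> real"
  assumes r: "r > 0" and h: "h r > 0"
    and A: "A = h r - 1 + 8*pi*P r*r^2*h r"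
    and hD: "(h has_real_derivative 8*pi*(rho + P r)*(h r)^2*r - h r*A/r) (at r)"
    and YD: "(Y has_real_derivative Y r*A/(2*r)) (at r)"
    and PD: "(P has_real_derivative -(rho + P r)*A/(2*r)) (at r)"
    and FD: "(F has_real_derivative (rho + rho*Y r + 6*P r*Y r) * (Y r*A/(2*r))) (at r)"
  shows "((\<lambda>t. t^3 * sigma_rr t (h t) (P t) (Y t) (F t) / h t) has_real_derivative
           -8*pi*r^2*((1 - Y r)*(rho + rho*Y r + 6*P r*Y r) + 6*F r)) (at r)"
  unfolding sigma_rr_def Let_def
  apply (rule derivative_eq_intros refl hD YD PD FD | (use r h in simp; fail))+
  unfolding A using r h by (simp add: field_simps power2_eq_square power3_eq_cube)

subsection \<open>Static perfect fluids\<close>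

locale static_fluid_radial =
  fixes U :: "real set" and h V rho P :: "real \<Rightarrow> real"
  assumes U_open: "open U" and U_pos: "U \<subseteq> {0<..}"
    and h_pos: "\<forall>r\<in>U. h r > 0" and V_pos: "\<forall>r\<in>U. V r > 0"
    and h_diff: "\<forall>r\<in>U. h differentiable (at r)" and V_diff: "\<forall>r\<in>U. V differentiable (at r)"
    and V'_diff: "\<forall>r\<in>U. deriv V differentiable (at r)" and P_diff: "\<forall>r\<in>U. P differentiable (at r)"
    and lap_eq: "\<forall>x. x 0 \<in> U \<and> 0 < x 1 \<and> x 1 < pi \<longrightarrow>
        lap (sph_metric h) (\<lambda>y. V (y 0)) x = 4 * pi * (rho (x 0) + 3 * P (x 0)) * V (x 0)"
    and ricci_eq: "\<forall>x. x 0 \<in> U \<and> 0 < x 1 \<and> x 1 < pi \<longrightarrow> (\<forall>i<3. \<forall>j<3.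
        ricci (sph_metric h) x i j = hess (sph_metric h) (\<lambda>y. V (y 0)) x i j / V (x 0)
          + 4 * pi * (rho (x 0) - P (x 0)) * sph_metric h x i j)"
    and euler: "\<forall>r\<in>U. deriv P r = - (rho r + P r) / V r * deriv V r"
begin

lemma potential_equations:
  assumes r: "r \<in> U"
  shows "deriv (deriv V) r - deriv h r / (2 * h r) * deriv V r
           = 4*pi*(rho r + 3*P r)*V r*h r - 2*deriv V r/r"
    and "2*r*deriv V r = V r*(h r - 1 + 8*pi*P r*r^2*h r)"
    and "deriv h r = 8*pi*(rho r + P r)*(h r)^2*r - h r*(h r - 1 + 8*pi*P r*r^2*h r)/r"
proof -
  define y :: pt where "y = (\<lambda>i. if i = 0 then r else pi / 2)"
  have y: "y 0 = r" "y 1 = pi / 2" "y 0 \<in> U" "0 < y 1" "y 1 < pi"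
    using r by (simp_all add: y_def)
  have r_pos: "r > 0" and h: "h r > 0" and V: "V r > 0"
    using r U_pos h_pos V_pos by auto
  have U_pos': "\<forall>r\<in>U. r > 0 \<and> h r > 0" and h_diff_r: "h differentiable (at (y 0))"
    using U_pos h_pos h_diff y by auto
  have nd: "sph_nondegenerate h y"
    using y r_pos h by (intro sph_nondegenerateI) auto
  let ?V'' = "deriv (deriv V) r - deriv h r / (2 * h r) * deriv V r"
  have L: "?V'' / h r + 2 * deriv V r / (r * h r) = 4*pi*(rho r + 3*P r)*V r"
    using lap_eq[rule_format, of y] lap_sph_metric_radial[OF nd, of V] y by simp
  have R0: "deriv h r / (r * h r) = ?V'' / V r + 4*pi*(rho r - P r)*h r"
    using ricci_eq[rule_format, of y 0 0] ricci_sph_metric(1)[OF U_open y(3) U_pos' h_diff_r y(4,5)]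
      hess_sph_metric_radial(1)[OF nd, of V] y by (simp add: sph_metric_def)
  have R1: "1 - 1/h r + r * deriv h r / (2 * (h r)^2)
      = (r / h r * deriv V r) / V r + 4*pi*(rho r - P r)*r^2"
    using ricci_eq[rule_format, of y 1 1] ricci_sph_metric(2)[OF U_open y(3) U_pos' h_diff_r y(4,5)]
      hess_sph_metric_radial(2)[OF nd, of V] y by (simp add: sph_metric_def)
  show V'': "?V'' = 4*pi*(rho r + 3*P r)*V r*h r - 2*deriv V r/r"
    using L r_pos h by (simp add: field_simps)
  have h': "deriv h r = 8*pi*(rho r + P r)*(h r)^2*r - 2*h r*deriv V r/V r"
    using R0 r_pos h V unfolding V'' by (simp add: field_simps power2_eq_square)
  have "r * deriv h r / (2 * (h r)^2) = 4*pi*(rho r + P r)*r^2 - r*deriv V r/(h r*V r)"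
    unfolding h' using h V by (simp add: field_simps power2_eq_square)
  moreover have "(r / h r * deriv V r) / V r = r*deriv V r/(h r*V r)"
    by simp
  ultimately have "2*(r*deriv V r/(h r*V r)) = 1 - 1/h r + 8*pi*P r*r^2"
    using R1 by (simp only:) (simp add: algebra_simps)
  then show V': "2*r*deriv V r = V r*(h r - 1 + 8*pi*P r*r^2*h r)"
    using h V by (simp add: field_simps)
  show "deriv h r = 8*pi*(rho r + P r)*(h r)^2*r - h r*(h r - 1 + 8*pi*P r*r^2*h r)/r"
  proof -
    have "2*h r*deriv V r/V r = h r*(2*r*deriv V r)/(r*V r)"
      using r_pos by simp
    also have "\<dots> = h r*(h r - 1 + 8*pi*P r*r^2*h r)/r"
      unfolding V' using V by simp
    finally show ?thesis
      using h' by simp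
  qed
qed

lemma radial_equations:
  assumes c: "c > 0" and r: "r \<in> U"
  defines "Y \<equiv> \<lambda>s. V s / c"
  shows "deriv (deriv Y) r - deriv h r / (2 * h r) * deriv Y r
           = 4*pi*(rho r + 3*P r)*Y r*h r - 2*deriv Y r/r"
    and "2*r*deriv Y r = Y r*(h r - 1 + 8*pi*P r*r^2*h r)"
proof -
  have Y: "deriv Y r = deriv V r / c" "deriv (deriv Y) r = deriv (deriv V) r / c"
    unfolding Y_def using deriv_divide_const_on_open[OF U_open r] V_diff V'_diff r by auto
  show "deriv (deriv Y) r - deriv h r / (2 * h r) * deriv Y r
           = 4*pi*(rho r + 3*P r)*Y r*h r - 2*deriv Y r/r"
    using potential_equations(1)[OF r] c unfolding Y unfolding Y_def by (simp add: field_simps)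
  show "2*r*deriv Y r = Y r*(h r - 1 + 8*pi*P r*r^2*h r)"
    using potential_equations(2)[OF r] c unfolding Y unfolding Y_def by (simp add: field_simps)
qed

lemma radial_derivatives:
  assumes c: "c > 0" and r: "r \<in> U"
  defines "Y \<equiv> \<lambda>s. V s / c" and "A \<equiv> h r - 1 + 8*pi*P r*r^2*h r"
  shows "(Y has_real_derivative Y r * A / (2*r)) (at r)"
    and "(h has_real_derivative 8*pi*(rho r + P r)*(h r)^2*r - h r*A/r) (at r)"
    and "(P has_real_derivative -(rho r + P r)*A/(2*r)) (at r)"
proof -
  have r_pos: "r > 0" and V: "V r > 0"
    using r U_pos V_pos by auto
  have VD: "(V has_real_derivative deriv V r) (at r)" and hD: "(h has_real_derivative deriv h r) (at r)"
    and PD: "(P has_real_derivative deriv P r) (at r)"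
    using V_diff h_diff P_diff r by (simp_all add: DERIV_deriv_iff_real_differentiable)
  have V': "deriv V r = V r * A / (2 * r)"
    using potential_equations(2)[OF r] r_pos by (simp add: A_def field_simps)
  show "(Y has_real_derivative Y r * A / (2*r)) (at r)"
    using DERIV_cdivide[OF VD, of c] unfolding Y_def V' by (simp add: mult.commute)
  show "(h has_real_derivative 8*pi*(rho r + P r)*(h r)^2*r - h r*A/r) (at r)"
    using hD potential_equations(3)[OF r] by (simp add: A_def)
  have "deriv P r = -(rho r + P r)*A/(2*r)"
    using euler[rule_format, OF r] V unfolding V' by simp
  then show "(P has_real_derivative -(rho r + P r)*A/(2*r)) (at r)"
    using PD by simp
qed

end

lemma static_fluid_radialI:
  fixes h V rho p :: "real \<Rightarrow> real"
  assumes "open U" "U \<subseteq> {0<..}" "\<forall>r\<in>U. h r > 0" "\<forall>r\<in>U. V r > 0"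
    and "\<forall>r\<in>U. h differentiable (at r)" and V_diff: "\<forall>r\<in>U. V differentiable (at r)"
    and "\<forall>r\<in>U. deriv V differentiable (at r)"
    and p_diff: "\<forall>r\<in>U. p differentiable (at (V r / c))"
    and "\<forall>x. x 0 \<in> U \<and> 0 < x 1 \<and> x 1 < pi \<longrightarrow>
        lap (sph_metric h) (\<lambda>y. V (y 0)) x
          = 4 * pi * (rho (V (x 0) / c) + 3 * p (V (x 0) / c)) * V (x 0)"
    and "\<forall>x. x 0 \<in> U \<and> 0 < x 1 \<and> x 1 < pi \<longrightarrow> (\<forall>i<3. \<forall>j<3.
        ricci (sph_metric h) x i j = hess (sph_metric h) (\<lambda>y. V (y 0)) x i j / V (x 0)
          + 4 * pi * (rho (V (x 0) / c) - p (V (x 0) / c)) * sph_metric h x i j)"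
    and euler: "\<forall>x. x 0 \<in> U \<and> 0 < x 1 \<and> x 1 < pi \<longrightarrow> (\<forall>i<3.
        pd (\<lambda>y. p (V (y 0) / c)) i x
          = - (rho (V (x 0) / c) + p (V (x 0) / c)) / V (x 0) * pd (\<lambda>y. V (y 0)) i x)"
  shows "static_fluid_radial U h V (\<lambda>r. rho (V r / c)) (\<lambda>r. p (V r / c))"
proof
  show "\<forall>r\<in>U. (\<lambda>s. p (V s / c)) differentiable (at r)"
    using V_diff p_diff unfolding real_differentiable_def by (metis DERIV_chain2 DERIV_cdivide)
  show "\<forall>r\<in>U. deriv (\<lambda>s. p (V s / c)) r = - (rho (V r / c) + p (V r / c)) / V r * deriv V r"
  proof
    fix r
    assume "r \<in> U"
    then show "deriv (\<lambda>s. p (V s / c)) r = - (rho (V r / c) + p (V r / c)) / V r * deriv V r"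
      using euler[rule_format, of "\<lambda>i. if i = 0 then r else pi / 2" 0]
        pd_radial[of "\<lambda>s. p (V s / c)"] pd_radial[of V] by simp
  qed
qed (fact assms)+

theorem proposition5:
  fixes I :: "real set" and h V :: "real \<Rightarrow> real" and rho p :: "real \<Rightarrow> real" and VS :: real
  assumes I_open: "open I" and I_pos: "I \<subseteq> {0<..}"
    and h_pos: "\<forall>r\<in>I. h r > 0" and V_pos: "\<forall>r\<in>I. V r > 0" and VS_pos: "VS > 0"
    and h_smooth: "\<forall>k. \<forall>r\<in>I. (deriv ^^ k) h differentiable (at r)"
    and V_smooth: "\<forall>k. \<forall>r\<in>I. (deriv ^^ k) V differentiable (at r)"
    and Y_range: "\<forall>r\<in>I. V r / VS \<in> {0<..<1}"
    and rho_cont: "continuous_on {0<..1} rho" and p_cont: "continuous_on {0<..1} p"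
    and rho_diff: "\<forall>y\<in>{0<..<1}. rho differentiable (at y)"
    and p_diff: "\<forall>y\<in>{0<..<1}. p differentiable (at y)"
    and einstein_lap: "\<forall>x. x 0 \<in> I \<and> 0 < x 1 \<and> x 1 < pi \<longrightarrow>
        lap (sph_metric h) (\<lambda>y. V (y 0)) x
          = 4 * pi * (rho (V (x 0) / VS) + 3 * p (V (x 0) / VS)) * V (x 0)"
    and einstein_ric: "\<forall>x. x 0 \<in> I \<and> 0 < x 1 \<and> x 1 < pi \<longrightarrow> (\<forall>i<3. \<forall>j<3.
        ricci (sph_metric h) x i j
          = hess (sph_metric h) (\<lambda>y. V (y 0)) x i j / V (x 0)
            + 4 * pi * (rho (V (x 0) / VS) - p (V (x 0) / VS)) * sph_metric h x i j)"
    and euler: "\<forall>x. x 0 \<in> I \<and> 0 < x 1 \<and> x 1 < pi \<longrightarrow> (\<forall>i<3.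
        pd (\<lambda>y. p (V (y 0) / VS)) i x
          = - (rho (V (x 0) / VS) + p (V (x 0) / VS)) / V (x 0) * pd (\<lambda>y. V (y 0)) i x)"
    and x_dom: "x 0 \<in> I" "0 < x 1" "x 1 < pi"
  shows "divg (sph_metric h)
           (\<lambda>y i. \<Sum>j<3. sigma (sph_metric h) (\<lambda>z. V (z 0) / VS) rho p y i j
                          * raise (sph_metric h) (xi_cov h) y j) x
         = - 8 * pi * (1 / sqrt (h (x 0)))
             * ((1 - V (x 0) / VS) * H0 rho p (V (x 0) / VS) + 6 * intH0 rho p (V (x 0) / VS))"
proof -
  let ?G = "sph_metric h" and ?Y = "\<lambda>r. V r / VS" and ?r = "x 0"
  let ?S = "(1 - ?Y ?r) * H0 rho p (?Y ?r) + 6 * intH0 rho p (?Y ?r)"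
  let ?w = "\<lambda>y i. \<Sum>j<3. sigma ?G (\<lambda>z. ?Y (z 0)) rho p y i j * raise ?G (xi_cov h) y j"
  define Q where "Q r = r^3 * sigma_rr r (h r) (p (?Y r)) (?Y r) (intH0 rho p (?Y r)) / h r" for r
  have "\<forall>r\<in>I. h differentiable (at r)" "\<forall>r\<in>I. V differentiable (at r)"
    "\<forall>r\<in>I. deriv V differentiable (at r)"
    using spec[OF h_smooth, of 0] spec[OF V_smooth, of 0] spec[OF V_smooth, of 1]
    by (simp_all add: One_nat_def)
  moreover have "\<forall>r\<in>I. p differentiable (at (?Y r))"
    using p_diff Y_range by blast
  ultimately interpret static_fluid_radial I h V "\<lambda>r. rho (?Y r)" "\<lambda>r. p (?Y r)"
    using I_open I_pos h_pos V_pos einstein_lap einstein_ric euler by (intro static_fluid_radialI)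
  have flux: "?w (x(0:=t)) 0 = Q t * sqrt (h t) / t\<^sup>2" if t: "t \<in> I" for t
  proof -
    have "sph_nondegenerate h (x(0:=t))"
      using t x_dom I_pos h_pos by (intro sph_nondegenerateI) auto
    then show ?thesis
      unfolding Q_def
      using sigma_xi_sph_metric_static[where f="?Y" and y="x(0:=t)" and h=h and rho=rho and p=p]
        radial_equations(1,2)[OF VS_pos t] t V_pos VS_pos by fastforce
  qed
  have r: "?r \<in> I" and r_pos: "?r > 0" and hr: "h ?r > 0" and Yr: "0 < ?Y ?r" "?Y ?r < 1"
    and theta: "sin (x 1) \<noteq> 0"
    using x_dom I_pos h_pos Y_range sin_gt_zero by fastforce+
  note derivs = radial_derivatives[OF VS_pos r]
  have QD: "(Q has_real_derivative -8*pi*?r^2*?S) (at ?r)"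
    unfolding Q_def H0_def
    by (rule sigma_rr_flux_has_real_derivative[where P="\<lambda>s. p (?Y s)", OF r_pos hr refl
          derivs(2,1,3) DERIV_chain2[OF intH0_has_real_derivative[OF rho_cont p_cont Yr] derivs(1),
          unfolded H0_def]])
  have "divg ?G ?w x = -8*pi*?r^2*?S / (?r^2 * sqrt (h ?r))"
    by (rule divg_sph_metric_radial[where x=x and h=h and Q=Q and U=I])
       (fact r_pos hr theta I_open r sigma_xi_sph_metric_radial(1,2)[where f="?Y"] flux QD derivs(2))+
  then show ?thesis
    using r_pos by simp
qed

end
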